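(* Let $N\ge3$ be an integer and $s\in\mathbb{R}$. Define $H=H_{int}^N(s)=(h_1,\dots,h_N)$ by $h_1=s$, $h_{n+2}=(s^2-1)s^n$ for $n=0,1,\dots,N-3$, and $h_N=-s^{N-2}$ (with $s^0=1$). Then the aperiodic auto-correlation $A_d=\sum_i h_ih_{i+d}$ (with $h_k=0$ for $k\notin\{1,\dots,N\}$) satisfies $A_0=1+s^{2N-2}$, $A_{N-1}=A_{-(N-1)}=-s^{N-1}$, and $A_d=0$ for all $0<|d|<N-1$. In particular, for integer $s$ the array is integer-valued. *)

theory Defs
  imports Complex_Main
begin

definition hint :: "nat \<Rightarrow> real \<Rightarrow> int \<Rightarrow> real" where
  "hint N s k =
     (if k = 1 then s
      else if 2 \<le> k \<and> k \<le> int N - 1 then (s\<^sup>2 - 1) * s ^ nat (k - 2)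
      else if k = int N then - (s ^ (N - 2))
      else 0)"

definition acorr :: "nat \<Rightarrow> (int \<Rightarrow> real) \<Rightarrow> int \<Rightarrow> real" where
  "acorr N h d = (\<Sum>i\<in>{1..int N}. h i * h (i + d))"

end

theory Submission
  imports Defs
begin

text \<open>Apart from its two end entries, H is the geometric progression (s^2 - 1) s^k.
  For a lag d with 0 < d < N - 1 the correlation consists of the first product
  s (s^2 - 1) s^(d-1), a geometric sum of interior products adding up to
  (s^2 - 1) s^d (s^(2n) - 1) with n = N - 2 - d, and the last product -(s^2 - 1) s^(2n+d);
  these cancel.
  The same computation at lag 0 gives 1 + s^(2N-2), only the two end entries meet at
  lag N - 1, and negative lags reduce to positive ones by symmetry.\<close>

lemma sum_atLeastAtMost_int_eq_sum_lessThan: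
  "(\<Sum>i\<in>{1..int m}. f i) = (\<Sum>k<m. f (int k + 1))"
  by (rule sum.reindex_bij_witness[of _ "\<lambda>k. int k + 1" "\<lambda>i. nat (i - 1)"]) auto

lemma acorr_nonneg_eq_sum:
  assumes supp: "\<And>i. i \<notin> {1..int N} \<Longrightarrow> h i = 0" and "d \<le> N"
  shows "acorr N h (int d) = (\<Sum>k<N - d. h (int k + 1) * h (int k + 1 + int d))"
proof -
  have "acorr N h (int d) = (\<Sum>i\<in>{1..int (N - d)}. h i * h (i + int d))"
    unfolding acorr_def
    by (rule sum.mono_neutral_right) (use assms in \<open>auto simp: of_nat_diff\<close>)
  then show ?thesis
    by (simp add: sum_atLeastAtMost_int_eq_sum_lessThan)
qed

lemma acorr_uminus:
  assumes supp: "\<And>i. i \<notin> {1..int N} \<Longrightarrow> h i = 0"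
  shows "acorr N h (- d) = acorr N h d"
proof -
  have "acorr N h (- d) = (\<Sum>i\<in>{1..int N} \<inter> {1 + d..int N + d}. h i * h (i + - d))"
    unfolding acorr_def by (rule sum.mono_neutral_right) (use supp in auto)
  also have "\<dots> = (\<Sum>j\<in>{1..int N} \<inter> {1 - d..int N - d}. h j * h (j + d))"
    by (rule sum.reindex_bij_witness[of _ "\<lambda>j. j + d" "\<lambda>i. i - d"]) (auto simp: mult.commute)
  also have "\<dots> = acorr N h d"
    unfolding acorr_def by (rule sum.mono_neutral_left) (use supp in auto)
  finally show ?thesis .
qed

lemma sum_lessThan_Suc_Suc_split:
  "(\<Sum>k<Suc (Suc n). f k) = f 0 + (\<Sum>k<n. f (Suc k)) + f (Suc n)"
  by (subst sum.lessThan_Suc_shift) (simp only: sum.lessThan_Suc add.assoc)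

lemma hint_outside: "N \<ge> 1 \<Longrightarrow> k \<notin> {1..int N} \<Longrightarrow> hint N s k = 0"
  by (auto simp: hint_def)

lemma hint_first: "hint N s 1 = s"
  by (simp add: hint_def)

lemma hint_interior: "k + 3 \<le> N \<Longrightarrow> hint N s (int k + 2) = (s\<^sup>2 - 1) * s ^ k"
  by (simp add: hint_def)

lemma hint_last: "N \<ge> 2 \<Longrightarrow> hint N s (int N) = - (s ^ (N - 2))"
  by (simp add: hint_def)

lemma hint_Ints: "s \<in> \<int> \<Longrightarrow> hint N s k \<in> \<int>"
  unfolding hint_def by (auto intro!: Ints_minus Ints_mult Ints_power Ints_diff)

lemma sum_hint_interior_products:
  assumes "n + d + 2 \<le> N"
  shows "(\<Sum>k<n. hint N s (int k + 2) * hint N s (int k + 2 + int d))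
           = (s\<^sup>2 - 1) * s ^ d * (s ^ (2 * n) - 1)"
proof -
  have "(\<Sum>k<n. hint N s (int k + 2) * hint N s (int k + 2 + int d))
          = (\<Sum>k<n. (s\<^sup>2 - 1) * s ^ d * ((s\<^sup>2 - 1) * (s\<^sup>2) ^ k))"
  proof (rule sum.cong)
    fix k assume "k \<in> {..<n}"
    with assms have left: "hint N s (int k + 2) = (s\<^sup>2 - 1) * s ^ k"
      by (simp add: hint_interior)
    have "hint N s (int k + 2 + int d) = hint N s (int (k + d) + 2)"
      by (simp add: ac_simps)
    also have "\<dots> = (s\<^sup>2 - 1) * s ^ (k + d)"
      using \<open>k \<in> {..<n}\<close> assms by (intro hint_interior) simp
    finally have right: "hint N s (int k + 2 + int d) = (s\<^sup>2 - 1) * s ^ (k + d)" .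
    from left right show "hint N s (int k + 2) * hint N s (int k + 2 + int d)
                 = (s\<^sup>2 - 1) * s ^ d * ((s\<^sup>2 - 1) * (s\<^sup>2) ^ k)"
      by (simp add: power_add power_mult_distrib power2_eq_square ac_simps)
  qed simp
  also have "\<dots> = (s\<^sup>2 - 1) * s ^ d * (s ^ (2 * n) - 1)"
    by (simp add: power_diff_1_eq sum_distrib_left power_mult mult.assoc)
  finally show ?thesis .
qed

lemma acorr_hint_zero:
  assumes "N \<ge> 3"
  shows "acorr N (hint N s) 0 = 1 + s ^ (2 * N - 2)"
proof -
  define n where "n = N - 2"
  have N: "N = Suc (Suc n)" using assms by (simp add: n_def)
  let ?g = "\<lambda>k. hint N s (int k + 1) * hint N s (int k + 1 + int 0)"
  have "acorr N (hint N s) 0 = (\<Sum>k<Suc (Suc n). ?g k)"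
    using acorr_nonneg_eq_sum[of N "hint N s" 0] assms by (simp add: hint_outside N)
  also have "\<dots> = ?g 0 + (\<Sum>k<n. hint N s (int k + 2) * hint N s (int k + 2 + int 0)) + ?g (Suc n)"
    by (simp only: sum_lessThan_Suc_Suc_split) (simp add: ac_simps)
  also have "\<dots> = s * s + (s\<^sup>2 - 1) * (s ^ (2 * n) - 1) + s ^ n * s ^ n"
    using hint_last[of N s] sum_hint_interior_products[of n 0 N s] by (simp add: hint_first N)
  also have "\<dots> = 1 + s ^ (2 * N - 2)"
  proof -
    have exponent: "2 * N - 2 = n + n + 2"
      by (simp add: N)
    show ?thesis
      by (subst exponent) (simp only: power_add mult_2, simp add: power2_eq_square algebra_simps)
  qed
  finally show ?thesis .
qed

lemma acorr_hint_interior_lag: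
  assumes "1 \<le> d" "d + 2 \<le> N"
  shows "acorr N (hint N s) (int d) = 0"
proof -
  define n where "n = N - d - 2"
  obtain e where d: "d = Suc e" using assms(1) by (cases d) auto
  have N: "N = n + d + 2" and Nd: "N - d = Suc (Suc n)" using assms(2) by (simp_all add: n_def)
  have N_le: "n + d + 2 \<le> N"
    by (simp add: N)
  let ?g = "\<lambda>k. hint N s (int k + 1) * hint N s (int k + 1 + int d)"
  have "hint N s (int 0 + 1 + int d) = hint N s (int e + 2)"
    using d by (simp add: ac_simps)
  also have "\<dots> = (s\<^sup>2 - 1) * s ^ e"
    by (simp add: hint_interior N d)
  finally have first: "?g 0 = s * ((s\<^sup>2 - 1) * s ^ e)"
    by (simp add: hint_first)
  have "hint N s (int (Suc n) + 1) = hint N s (int n + 2)"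
    by (simp add: ac_simps)
  also have "\<dots> = (s\<^sup>2 - 1) * s ^ n"
    using assms by (simp add: hint_interior N)
  moreover have "hint N s (int (Suc n) + 1 + int d) = - (s ^ (n + d))"
    using hint_last[of N s] by (simp add: N ac_simps)
  ultimately have last: "?g (Suc n) = (s\<^sup>2 - 1) * s ^ n * - (s ^ (n + d))"
    by simp
  have "acorr N (hint N s) (int d) = (\<Sum>k<Suc (Suc n). ?g k)"
    using acorr_nonneg_eq_sum[of N "hint N s" d] assms by (simp add: hint_outside Nd)
  also have "\<dots> = ?g 0 + (\<Sum>k<n. hint N s (int k + 2) * hint N s (int k + 2 + int d)) + ?g (Suc n)"
    by (simp only: sum_lessThan_Suc_Suc_split) (simp add: ac_simps)
  also have "\<dots> = s * ((s\<^sup>2 - 1) * s ^ e) + (s\<^sup>2 - 1) * s ^ d * (s ^ (2 * n) - 1)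
                    + (s\<^sup>2 - 1) * s ^ n * - (s ^ (n + d))"
    by (simp only: first last sum_hint_interior_products[OF N_le])
  also have "\<dots> = 0"
    unfolding d mult_2 power_add by (simp add: power2_eq_square algebra_simps)
  finally show ?thesis .
qed

lemma acorr_hint_last_lag:
  assumes "N \<ge> 3"
  shows "acorr N (hint N s) (int N - 1) = - (s ^ (N - 1))"
proof -
  have "acorr N (hint N s) (int (N - 1)) = hint N s 1 * hint N s (int N)"
    using acorr_nonneg_eq_sum[of N "hint N s" "N - 1"] assms
    by (simp add: hint_outside of_nat_diff)
  also have "\<dots> = - (s ^ (N - 1))"
  proof -
    have "N - 1 = Suc (N - 2)"
      using assms by simp
    then show ?thesis
      using assms by (simp add: hint_first hint_last)
  qed
  finally show ?thesis
    using assms by (simp add: of_nat_diff)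
qed

theorem mainTheorem8:
  fixes N :: nat and s :: real
  assumes "N \<ge> 3"
  shows "acorr N (hint N s) 0 = 1 + s ^ (2 * N - 2) \<and>
     acorr N (hint N s) (int N - 1) = - (s ^ (N - 1)) \<and>
     acorr N (hint N s) (- (int N - 1)) = - (s ^ (N - 1)) \<and>
     (\<forall>d::int. 0 < \<bar>d\<bar> \<and> \<bar>d\<bar> < int N - 1 \<longrightarrow> acorr N (hint N s) d = 0) \<and>
     (s \<in> \<int> \<longrightarrow> (\<forall>k. hint N s k \<in> \<int>))"
proof -
  have symm: "acorr N (hint N s) (- d) = acorr N (hint N s) d" for d
    using assms by (intro acorr_uminus hint_outside) auto
  have interior: "acorr N (hint N s) d = 0" if "0 < \<bar>d\<bar>" "\<bar>d\<bar> < int N - 1" for d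
  proof -
    have "acorr N (hint N s) (int (nat \<bar>d\<bar>)) = 0"
      using that by (intro acorr_hint_interior_lag) auto
    then show ?thesis
      by (cases "d \<ge> 0") (simp_all add: symm[of "- d", simplified])
  qed
  show ?thesis
    using acorr_hint_zero[OF assms] acorr_hint_last_lag[OF assms] interior hint_Ints
    by (simp add: symm[of "int N - 1", simplified])
qed

end
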